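(* Let $d\ge3$ and let $\mathcal C\subset\mathbb T^d=\mathbb R^d/\mathbb Z^d$ be a smooth curve of length $L$ with unit speed parameterization $\gamma:[0,L]\to\mathbb T^d$. For a positive integer $E$ with $\mathcal E(E)=\{\mu\in\mathbb Z^d:|\mu|^2=E\}$ nonempty, let $N=\#\mathcal E(E)$ and $$r(t_1,t_2)=\frac1N\sum_{\mu\in\mathcal E(E)}\cos\left(2\pi\langle\mu,\gamma(t_1)-\gamma(t_2)\rangle\right).$$ Then there exists a constant $c_0>0$ (independent of $E$) such that for all $E$ and all $t_1\ne t_2\in[0,L]$ with $|t_2-t_1|<c_0/\sqrt E$ we have $r(t_1,t_2)\ne\pm1$.
   Context: A curve means a parameterized, compact, immersed curve. $r$ is the covariance function $\mathbb E[f(t_1)f(t_2)]$ of the restriction $f=F\circ\gamma$ of the arithmetic random wave $F(x)=N^{-1/2}\sum_{\mu\in\mathcal E(E)}a_\mu e^{2\pi i\langle\mu,x\rangle}$ ($a_\mu$ standard complex Gaussians, independent save for $a_{-\mu}=\overline{a_\mu}$). *)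

theory Defs
  imports "HOL-Analysis.Analysis"
begin

definition smooth_on :: "real set \<Rightarrow> (real \<Rightarrow> 'a::real_normed_vector) \<Rightarrow> bool" where
  "smooth_on S g \<longleftrightarrow>
     (\<exists>D::nat \<Rightarrow> real \<Rightarrow> 'a. D 0 = g \<and>
        (\<forall>k. \<forall>t\<in>S. (D k has_vector_derivative D (Suc k) t) (at t within S)))"

definition lattice_shell :: "nat \<Rightarrow> (int ^ 'n::finite) set" where
  "lattice_shell E = {\<mu>. (\<Sum>i\<in>UNIV. (\<mu> $ i)^2) = int E}"

definition ipair :: "int ^ 'n::finite \<Rightarrow> real ^ 'n \<Rightarrow> real" where
  "ipair \<mu> x = (\<Sum>i\<in>UNIV. of_int (\<mu> $ i) * x $ i)"

text \<open>Covariance function r(t1,t2) of the arithmetic random wave restricted to the curve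
  (given by a lift gamma : [0,L] -> R^d of the torus curve).\<close>
definition covr :: "(real \<Rightarrow> real ^ 'n::finite) \<Rightarrow> nat \<Rightarrow> real \<Rightarrow> real \<Rightarrow> real" where
  "covr \<gamma> E t1 t2 =
     (1 / real (card (lattice_shell E :: (int ^ 'n) set))) *
     (\<Sum>\<mu>\<in>lattice_shell E. cos (2 * pi * ipair \<mu> (\<gamma> t1 - \<gamma> t2)))"

end

theory Submission
  imports Defs
begin

text \<open>For nearby parameters the unit-speed curve is bi-Lipschitz, so the chord
  \<open>\<delta> = \<gamma>(t\<^sub>1) - \<gamma>(t\<^sub>2)\<close> is nonzero and, by Cauchy--Schwarz,
  \<open>|\<langle>\<mu>, \<delta>\<rangle>| \<le> \<surd>E |\<delta>| < 1/4\<close> for every \<open>\<mu> \<in> \<E>(E)\<close> once \<open>|t\<^sub>1 - t\<^sub>2| < c\<^sub>0/\<surd>E\<close>.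
  Then every cosine in \<open>r\<close> is positive, so \<open>r > 0\<close>; and \<open>r = 1\<close> would force
  \<open>\<langle>\<mu>, \<delta>\<rangle> = 0\<close> for all \<open>\<mu> \<in> \<E>(E)\<close>, which is impossible because the shell, being closed
  under permuting and negating coordinates, spans \<open>\<real>\<^sup>d\<close>. The argument works in every
  dimension.\<close>

lemma smooth_on_imp_C1:
  assumes "smooth_on S g"
  obtains g' where "\<And>t. t \<in> S \<Longrightarrow> (g has_vector_derivative g' t) (at t within S)"
    and "continuous_on S g'"
proof -
  obtain D where D0: "D 0 = g"
    and D: "\<And>k t. t \<in> S \<Longrightarrow> (D k has_vector_derivative D (Suc k) t) (at t within S)"
    using assms unfolding smooth_on_def by blast
  have "continuous_on S (D 1)"
    using D[of _ 1] has_vector_derivative_continuous continuous_on_eq_continuous_within by blast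
  then show thesis
    using that[of "D 1"] D[of _ 0] D0 by simp
qed

lemma C1_uniform_linearization:
  fixes \<gamma> \<gamma>' :: "real \<Rightarrow> 'a::real_normed_vector"
  assumes der: "\<And>t. t \<in> {a..b} \<Longrightarrow> (\<gamma> has_vector_derivative \<gamma>' t) (at t within {a..b})"
    and cont: "continuous_on {a..b} \<gamma>'"
    and "e > 0"
  shows "\<exists>c>0. \<forall>t1\<in>{a..b}. \<forall>t2\<in>{a..b}. \<bar>t2 - t1\<bar> < c \<longrightarrow>
           norm (\<gamma> t2 - \<gamma> t1 - (t2 - t1) *\<^sub>R \<gamma>' t1) \<le> \<bar>t2 - t1\<bar> * e"
proof -
  obtain c where "c > 0" and c: "\<And>x y. x \<in> {a..b} \<Longrightarrow> y \<in> {a..b} \<Longrightarrow> dist y x < c \<Longrightarrow>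
      dist (\<gamma>' y) (\<gamma>' x) < e"
    using compact_uniformly_continuous[OF cont] \<open>e > 0\<close> unfolding uniformly_continuous_on_def
    by (meson compact_Icc)
  have "norm (\<gamma> t2 - \<gamma> t1 - (t2 - t1) *\<^sub>R \<gamma>' t1) \<le> \<bar>t2 - t1\<bar> * e"
    if t1: "t1 \<in> {a..b}" and t2: "t2 \<in> {a..b}" and near: "\<bar>t2 - t1\<bar> < c" for t1 t2
  proof -
    define S where "S = closed_segment t1 t2"
    have SI: "S \<subseteq> {a..b}"
      using t1 t2 by (simp add: S_def closed_segment_subset)
    have "t1 + u *\<^sub>R (t2 - t1) \<in> S" if "u \<in> {0..1}" for u
      using that by (auto simp: S_def closed_segment_def algebra_simps intro!: exI[of _ u])
    moreover have "(\<gamma> has_derivative (\<lambda>h. h *\<^sub>R \<gamma>' x)) (at x within S)" if "x \<in> S" for x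
    proof -
      have "x \<in> {a..b}"
        using SI that by blast
      then show ?thesis
        using der has_derivative_subset[OF _ SI] unfolding has_vector_derivative_def by blast
    qed
    moreover have "onorm ((\<lambda>h. h *\<^sub>R \<gamma>' x) - (\<lambda>h. h *\<^sub>R \<gamma>' t1)) \<le> e" if "x \<in> S" for x
    proof -
      have "(\<lambda>h. h *\<^sub>R \<gamma>' x) - (\<lambda>h. h *\<^sub>R \<gamma>' t1) = (\<lambda>h. id h *\<^sub>R (\<gamma>' x - \<gamma>' t1))"
        by (auto simp: fun_diff_def algebra_simps)
      then have "onorm ((\<lambda>h. h *\<^sub>R \<gamma>' x) - (\<lambda>h. h *\<^sub>R \<gamma>' t1)) = dist (\<gamma>' x) (\<gamma>' t1)"
        using onorm_scaleR_left[OF bounded_linear_ident] onorm_id[where 'a=real]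
        by (simp add: dist_norm)
      moreover have "dist x t1 \<le> \<bar>t2 - t1\<bar>"
        using dist_in_closed_segment[of x t1 t2] that by (simp add: S_def dist_real_def abs_minus_commute)
      ultimately show ?thesis
        using c[of t1 x] t1 that SI near by auto
    qed
    moreover have "t1 \<in> S" by (simp add: S_def)
    ultimately show ?thesis
      using differentiable_bound_linearization[of t1 t2 S \<gamma> "\<lambda>x h. h *\<^sub>R \<gamma>' x"] by simp
  qed
  with \<open>c > 0\<close> show ?thesis by blast
qed

lemma unit_speed_locally_bilipschitz:
  fixes \<gamma> \<gamma>' :: "real \<Rightarrow> 'a::real_normed_vector"
  assumes "\<And>t. t \<in> {a..b} \<Longrightarrow> (\<gamma> has_vector_derivative \<gamma>' t) (at t within {a..b})"
    and "continuous_on {a..b} \<gamma>'"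
    and unit: "\<And>t. t \<in> {a..b} \<Longrightarrow> norm (\<gamma>' t) = 1"
  shows "\<exists>c>0. \<forall>t1\<in>{a..b}. \<forall>t2\<in>{a..b}. \<bar>t2 - t1\<bar> < c \<longrightarrow>
           \<bar>t2 - t1\<bar> / 2 \<le> norm (\<gamma> t2 - \<gamma> t1) \<and> norm (\<gamma> t2 - \<gamma> t1) \<le> 3/2 * \<bar>t2 - t1\<bar>"
proof -
  obtain c where "c > 0" and lin: "\<And>t1 t2. t1 \<in> {a..b} \<Longrightarrow> t2 \<in> {a..b} \<Longrightarrow> \<bar>t2 - t1\<bar> < c \<Longrightarrow>
      norm (\<gamma> t2 - \<gamma> t1 - (t2 - t1) *\<^sub>R \<gamma>' t1) \<le> \<bar>t2 - t1\<bar> * (1/2)"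
    using C1_uniform_linearization[OF assms(1,2), of "1/2"] by auto
  have "\<bar>t2 - t1\<bar> / 2 \<le> norm (\<gamma> t2 - \<gamma> t1) \<and> norm (\<gamma> t2 - \<gamma> t1) \<le> 3/2 * \<bar>t2 - t1\<bar>"
    if t1: "t1 \<in> {a..b}" and t2: "t2 \<in> {a..b}" and "\<bar>t2 - t1\<bar> < c" for t1 t2
  proof -
    have "norm ((t2 - t1) *\<^sub>R \<gamma>' t1) = \<bar>t2 - t1\<bar>"
      using unit[OF t1] by simp
    then show ?thesis
      using lin[OF that] norm_triangle_ineq2[of "\<gamma> t2 - \<gamma> t1" "(t2 - t1) *\<^sub>R \<gamma>' t1"]
        norm_triangle_ineq3[of "\<gamma> t2 - \<gamma> t1" "(t2 - t1) *\<^sub>R \<gamma>' t1"]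
      by (auto simp: abs_le_iff)
  qed
  with \<open>c > 0\<close> show ?thesis by blast
qed

lemma abs_ipair_le_lattice_shell:
  assumes "\<mu> \<in> lattice_shell E"
  shows "\<bar>ipair \<mu> x\<bar> \<le> sqrt (real E) * norm x"
proof -
  define m :: "real ^ 'a" where "m = (\<chi> i. of_int (\<mu> $ i))"
  have "m \<bullet> m = of_int (\<Sum>i\<in>UNIV. (\<mu> $ i)^2)"
    by (simp add: m_def inner_vec_def power2_eq_square)
  also have "\<dots> = real E"
    using assms by (simp add: lattice_shell_def)
  finally have "norm m = sqrt (real E)"
    by (simp add: norm_eq_sqrt_inner)
  moreover have "ipair \<mu> x = m \<bullet> x"
    by (simp add: ipair_def m_def inner_vec_def)
  ultimately show ?thesis
    using Cauchy_Schwarz_ineq2[of m x] by simp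
qed

text \<open>Moving a nonzero entry \<open>\<mu> $ i\<close> of a shell vector to position \<open>j\<close> and flipping
  its sign there gives two shell vectors whose pairings with \<open>x\<close> differ by
  \<open>2 \<mu>\<^sub>i x\<^sub>j\<close>.\<close>

lemma lattice_shell_orthogonal_imp_zero:
  fixes x :: "real ^ 'n"
  assumes "E > 0" and ne: "(lattice_shell E :: (int ^ 'n) set) \<noteq> {}"
    and orth: "\<And>\<mu>. \<mu> \<in> (lattice_shell E :: (int ^ 'n) set) \<Longrightarrow> ipair \<mu> x = 0"
  shows "x = 0"
proof -
  obtain \<mu> :: "int ^ 'n" where mu: "\<mu> \<in> lattice_shell E"
    using ne by blast
  have "\<exists>i. \<mu> $ i \<noteq> 0"
  proof (rule ccontr)
    assume "\<nexists>i. \<mu> $ i \<noteq> 0"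
    then have "(\<Sum>k\<in>UNIV. (\<mu> $ k)^2) = 0"
      by simp
    with mu \<open>E > 0\<close> show False
      by (simp add: lattice_shell_def)
  qed
  then obtain i where i: "\<mu> $ i \<noteq> 0"
    by blast
  have "x $ j = 0" for j
  proof -
    define sw where "sw = Transposition.transpose i j"
    define \<nu> :: "int ^ 'n" where "\<nu> = (\<chi> k. \<mu> $ sw k)"
    define \<nu>' :: "int ^ 'n" where "\<nu>' = (\<chi> k. if k = j then - \<nu> $ k else \<nu> $ k)"
    have "(\<Sum>k\<in>UNIV. (\<nu> $ k)^2) = (\<Sum>k\<in>UNIV. (\<mu> $ k)^2)"
      unfolding \<nu>_def by (rule sum.reindex_bij_witness[of _ sw sw]) (auto simp: sw_def)
    then have nu: "\<nu> \<in> lattice_shell E"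
      using mu by (simp add: lattice_shell_def)
    have "(\<Sum>k\<in>UNIV. (\<nu>' $ k)^2) = (\<Sum>k\<in>UNIV. (\<nu> $ k)^2)"
      unfolding \<nu>'_def by (rule sum.cong) auto
    then have nu': "\<nu>' \<in> lattice_shell E"
      using nu by (simp add: lattice_shell_def)
    have "ipair \<nu> x - ipair \<nu>' x = (\<Sum>k\<in>UNIV. if k = j then 2 * of_int (\<nu> $ j) * x $ j else 0)"
      unfolding ipair_def sum_subtractf[symmetric] by (rule sum.cong) (auto simp: \<nu>'_def)
    then have "2 * of_int (\<mu> $ i) * x $ j = 0"
      using orth[OF nu] orth[OF nu'] by (simp add: \<nu>_def sw_def)
    with i show ?thesis by simp
  qed
  then show ?thesis
    by (simp add: vec_eq_iff)
qed

lemma sum_cos_2pi_pos: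
  assumes "finite A" "A \<noteq> {}" and small: "\<And>a. a \<in> A \<Longrightarrow> \<bar>x a\<bar> < 1/4"
  shows "(\<Sum>a\<in>A. cos (2 * pi * x a)) > 0"
proof (rule sum_pos[OF assms(1,2)])
  fix a assume "a \<in> A"
  then have "\<bar>2 * pi * x a\<bar> < 2 * pi * (1/4)"
    using mult_strict_left_mono[OF small, of a "2 * pi"] pi_gt_zero by (simp add: abs_mult)
  then show "cos (2 * pi * x a) > 0"
    unfolding abs_less_iff by (intro cos_gt_zero_pi) linarith+
qed

lemma sum_cos_2pi_eq_card_imp_zero:
  assumes "finite A" and small: "\<And>a. a \<in> A \<Longrightarrow> \<bar>x a\<bar> < 1"
    and sum: "(\<Sum>a\<in>A. cos (2 * pi * x a)) = real (card A)" and "a \<in> A"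
  shows "x a = 0"
proof -
  have "(\<Sum>a\<in>A. 1 - cos (2 * pi * x a)) = 0"
    using sum by (simp add: sum_subtractf)
  then have "cos (2 * pi * x a) = 1"
    using sum_nonneg_eq_0_iff[OF \<open>finite A\<close>, of "\<lambda>a. 1 - cos (2 * pi * x a)"] \<open>a \<in> A\<close> by simp
  then obtain n :: int where "2 * pi * x a = real_of_int n * 2 * pi"
    using cos_one_2pi_int by blast
  then have "x a = of_int n"
    by simp
  with small[OF \<open>a \<in> A\<close>] show ?thesis
    by simp
qed

lemma covr_pos_ne_1:
  fixes \<gamma> :: "real \<Rightarrow> real ^ 'n"
  assumes "E > 0" and ne: "(lattice_shell E :: (int ^ 'n) set) \<noteq> {}"
    and "\<gamma> t1 \<noteq> \<gamma> t2"
    and short: "sqrt (real E) * norm (\<gamma> t1 - \<gamma> t2) < 1/4"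
  shows "covr \<gamma> E t1 t2 \<ge> 0 \<and> covr \<gamma> E t1 t2 \<noteq> 1"
proof -
  have small: "\<bar>ipair \<mu> (\<gamma> t1 - \<gamma> t2)\<bar> < 1/4" if "\<mu> \<in> lattice_shell E" for \<mu> :: "int ^ 'n"
    using abs_ipair_le_lattice_shell[OF that, of "\<gamma> t1 - \<gamma> t2"] short by linarith
  let ?A = "lattice_shell E :: (int ^ 'n) set"
  let ?S = "\<Sum>\<mu>\<in>?A. cos (2 * pi * ipair \<mu> (\<gamma> t1 - \<gamma> t2))"
  have covr: "covr \<gamma> E t1 t2 = ?S / real (card ?A)"
    by (simp add: covr_def)
  show ?thesis
  proof (cases "finite ?A")
    case True
    then have card: "real (card ?A) > 0"
      using ne by (simp add: card_gt_0_iff)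
    have "covr \<gamma> E t1 t2 \<ge> 0"
      using sum_cos_2pi_pos[OF True ne, of "\<lambda>\<mu>. ipair \<mu> (\<gamma> t1 - \<gamma> t2)"] small card covr
      by simp
    moreover have "covr \<gamma> E t1 t2 \<noteq> 1"
    proof
      assume "covr \<gamma> E t1 t2 = 1"
      then have "?S = real (card ?A)"
        using card covr by simp
      then have "ipair \<mu> (\<gamma> t1 - \<gamma> t2) = 0" if "\<mu> \<in> ?A" for \<mu>
        using sum_cos_2pi_eq_card_imp_zero[OF True _ _ that] small by force
      then have "\<gamma> t1 - \<gamma> t2 = 0"
        by (rule lattice_shell_orthogonal_imp_zero[OF \<open>E > 0\<close> ne])
      with \<open>\<gamma> t1 \<noteq> \<gamma> t2\<close> show False
        by simp
    qed
    ultimately show ?thesis ..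
  qed (use covr in simp) \<comment> \<open>an infinite shell would have \<open>card = 0\<close>, hence \<open>covr = 0\<close>\<close>
qed

lemma covr_ne_pm1_of_bilipschitz_chord:
  fixes \<gamma> :: "real \<Rightarrow> real ^ 'n"
  assumes "E > 0" and "(lattice_shell E :: (int ^ 'n) set) \<noteq> {}" and "t1 \<noteq> t2"
    and near: "\<bar>t2 - t1\<bar> * sqrt (real E) < 1/8"
    and lower: "\<bar>t2 - t1\<bar> / 2 \<le> norm (\<gamma> t1 - \<gamma> t2)"
    and upper: "norm (\<gamma> t1 - \<gamma> t2) \<le> 3/2 * \<bar>t2 - t1\<bar>"
  shows "covr \<gamma> E t1 t2 \<noteq> 1 \<and> covr \<gamma> E t1 t2 \<noteq> -1"
proof -
  have "sqrt (real E) * norm (\<gamma> t1 - \<gamma> t2) \<le> 3/2 * (\<bar>t2 - t1\<bar> * sqrt (real E))"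
    using mult_left_mono[OF upper, of "sqrt (real E)"] by (simp add: mult.commute)
  also have "\<dots> < 1/4"
    using near by linarith
  finally have "sqrt (real E) * norm (\<gamma> t1 - \<gamma> t2) < 1/4" .
  moreover have "\<gamma> t1 \<noteq> \<gamma> t2"
    using lower \<open>t1 \<noteq> t2\<close> by auto
  ultimately show ?thesis
    using covr_pos_ne_1[OF assms(1,2), of \<gamma> t1 t2] by force
qed

theorem lemma2p4:
  fixes \<gamma> :: "real \<Rightarrow> real ^ 'n" and L :: real
  assumes "CARD('n) \<ge> 3"
    and "L > 0"
    and "smooth_on {0..L} \<gamma>"
    and "\<forall>t\<in>{0..L}. \<exists>v. (\<gamma> has_vector_derivative v) (at t within {0..L}) \<and> norm v = 1"
  shows "\<exists>c0>0. \<forall>E::nat. E > 0 \<longrightarrow> (lattice_shell E :: (int ^ 'n) set) \<noteq> {} \<longrightarrow>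
           (\<forall>t1\<in>{0..L}. \<forall>t2\<in>{0..L}. t1 \<noteq> t2 \<and> \<bar>t2 - t1\<bar> < c0 / sqrt (real E) \<longrightarrow>
              covr \<gamma> E t1 t2 \<noteq> 1 \<and> covr \<gamma> E t1 t2 \<noteq> -1)"
proof -
  obtain \<gamma>' where der: "\<And>t. t \<in> {0..L} \<Longrightarrow> (\<gamma> has_vector_derivative \<gamma>' t) (at t within {0..L})"
    and "continuous_on {0..L} \<gamma>'"
    using smooth_on_imp_C1[OF assms(3)] by blast
  moreover have "norm (\<gamma>' t) = 1" if "t \<in> {0..L}" for t
    using assms(2,4) der[OF that] that vector_derivative_unique_within_closed_interval by fastforce
  ultimately obtain c where "c > 0" and bilip: "\<And>t1 t2. t1 \<in> {0..L} \<Longrightarrow> t2 \<in> {0..L} \<Longrightarrow>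
      \<bar>t2 - t1\<bar> < c \<Longrightarrow> \<bar>t2 - t1\<bar> / 2 \<le> norm (\<gamma> t2 - \<gamma> t1) \<and> norm (\<gamma> t2 - \<gamma> t1) \<le> 3/2 * \<bar>t2 - t1\<bar>"
    using unit_speed_locally_bilipschitz[of 0 L \<gamma> \<gamma>'] by blast
  define c0 where "c0 = min c (1/8)"
  have "covr \<gamma> E t1 t2 \<noteq> 1 \<and> covr \<gamma> E t1 t2 \<noteq> -1"
    if "E > 0" "(lattice_shell E :: (int ^ 'n) set) \<noteq> {}" "t1 \<in> {0..L}" "t2 \<in> {0..L}"
      "t1 \<noteq> t2" "\<bar>t2 - t1\<bar> < c0 / sqrt (real E)" for E t1 t2
  proof -
    have sqrtE: "sqrt (real E) \<ge> 1"
      using \<open>E > 0\<close> by simp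
    have "\<bar>t2 - t1\<bar> * sqrt (real E) < c0"
      using \<open>\<bar>t2 - t1\<bar> < c0 / sqrt (real E)\<close> sqrtE by (simp add: pos_less_divide_eq)
    moreover have "\<bar>t2 - t1\<bar> \<le> \<bar>t2 - t1\<bar> * sqrt (real E)"
      using sqrtE by (simp add: mult_le_cancel_left1)
    ultimately have "\<bar>t2 - t1\<bar> * sqrt (real E) < c0" "\<bar>t2 - t1\<bar> < c"
      by (auto simp: c0_def)
    with bilip[OF that(3,4)] show ?thesis
      using covr_ne_pm1_of_bilipschitz_chord[OF that(1,2,5)] by (simp add: c0_def norm_minus_commute)
  qed
  moreover have "c0 > 0"
    using \<open>c > 0\<close> by (simp add: c0_def)
  ultimately show ?thesis
    by blast
qed

end
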